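(* Let $\eta$ be a random variable taking values in $\{0,1,2,\dots\}\cup\{\infty\}$ with $P(\eta=0)<1$. If $(p_n)_{n\in\mathbb{N}}$ is a sequence in $(0,1]$ with $\lim_{n\to\infty}p_n=1$, then for every $\epsilon\in(0,1)$, \[\lim_{n\to\infty}P\big(V_\infty(\mathcal{K}_n,p_n)\geq (1-\epsilon)n\big)=1.\]
   Context: Frog model on the complete graph: $\mathcal{K}_n=(\mathcal{V}_n,\mathcal{E}_n)$ is the complete graph on $n$ vertices (every pair of distinct vertices joined by an edge), with a distinguished vertex $o$ called the root. Let $\{\eta_v\}_{v\in\mathcal{V}_n}$ be i.i.d. copies of $\eta$. Initially each vertex $v\neq o$ carries $\eta_v$ inactive particles and $o$ carries $1+\eta_o$ active particles. At each instant of time, independently of everything else, each active particle survives with probability $p$ and otherwise dies (is permanently removed); a surviving active particle performs one step of simple random walk on $\mathcal{K}_n$ (jumps to a uniformly chosen vertex different from its current one), activating all inactive particles at the vertex it reaches. Inactive particles stay put until activated. A vertex is visited if some active particle is ever at it (the root is visited). $V_\infty(\mathcal{K}_n,p)$ is the total number of visited vertices once no active particles remain; in the cases $P(\eta=\infty)>0$ or $p=1$ one sets $V_\infty(\mathcal{K}_n,p):=n$. *)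

theory Defs
  imports "HOL-Probability.Probability" "HOL-Library.Extended_Nat"
begin

text \<open>Frog model on the complete graph K_n with vertex set {0..<n} and root 0.
  A state is (A, Vis): A = multiset of positions of active particles, Vis = set of
  visited vertices. Inactive particles at v are exactly the eta v initial ones when
  v is not in Vis (and none otherwise), so they need not be stored.\<close>

fun frog_move :: "real \<Rightarrow> nat \<Rightarrow> nat list \<Rightarrow> nat multiset pmf" where
  "frog_move p n [] = return_pmf {#}"
| "frog_move p n (x # xs) =
     bind_pmf (bernoulli_pmf p) (\<lambda>b.
     bind_pmf (frog_move p n xs) (\<lambda>M.
       if b then map_pmf (\<lambda>y. add_mset y M) (pmf_of_set ({0..<n} - {x}))
       else return_pmf M))"

definition frog_step :: "real \<Rightarrow> nat \<Rightarrow> (nat \<Rightarrow> nat) \<Rightarrow>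
    nat multiset \<times> nat set \<Rightarrow> (nat multiset \<times> nat set) pmf" where
  "frog_step p n eta s =
     map_pmf (\<lambda>M. (M + (\<Sum>v\<in>set_mset M - snd s. replicate_mset (eta v) v),
                    snd s \<union> set_mset M))
       (frog_move p n (sorted_list_of_multiset (fst s)))"

definition frog_start :: "(nat \<Rightarrow> nat) \<Rightarrow> nat multiset \<times> nat set" where
  "frog_start eta = (replicate_mset (1 + eta 0) 0, {0})"

definition frog_state :: "real \<Rightarrow> nat \<Rightarrow> (nat \<Rightarrow> nat) \<Rightarrow> nat \<Rightarrow>
    (nat multiset \<times> nat set) pmf" where
  "frog_state p n eta t = ((\<lambda>D. bind_pmf D (frog_step p n eta)) ^^ t) (return_pmf (frog_start eta))"

text \<open>Initial configuration: eta_v i.i.d. with law eta (used when eta is a.s. finite).\<close>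
definition frog_init :: "enat pmf \<Rightarrow> nat \<Rightarrow> (nat \<Rightarrow> nat) pmf" where
  "frog_init eta n = Pi_pmf {0..<n} 0 (\<lambda>_. map_pmf the_enat eta)"

definition frog_time :: "enat pmf \<Rightarrow> real \<Rightarrow> nat \<Rightarrow> nat \<Rightarrow> (nat multiset \<times> nat set) pmf" where
  "frog_time eta p n t = bind_pmf (frog_init eta n) (\<lambda>e. frog_state p n e t)"

text \<open>P(V_infinity(K_n,p) \<ge> x). Since the visited set is nondecreasing in time and
  V_infinity is its final cardinality, {V_infinity \<ge> x} is the increasing union over t
  of {V_t \<ge> x}, so its probability is the supremum over t. Conventionally
  V_infinity = n if P(eta = infinity) > 0 or p = 1.\<close>
definition frog_prob_ge :: "enat pmf \<Rightarrow> real \<Rightarrow> nat \<Rightarrow> real \<Rightarrow> real" where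
  "frog_prob_ge eta p n x =
     (if pmf eta \<infinity> > 0 \<or> p = 1 then (if x \<le> real n then 1 else 0)
      else (SUP t. measure_pmf.prob (frog_time eta p n t) {s. x \<le> real (card (snd s))}))"

end

theory Submission
  imports Defs "HOL-Real_Asymp.Real_Asymp"
begin

text \<open>Let W be the set of unvisited vertices, m = P(eta > 0) and K the integer part of epsilon n.
  If fewer than n - K vertices are ever visited, then at the time the process dies |W| > K, and one of
  three nonnegative supermartingales of the process is large. While particles are active and
  |W| > K, each surviving jump hits W with probability at least (K + 1) / (n - 1), so the expectation
  of 2^|W| decays geometrically in time. While more than m (K + 1) / 2 vertices of W still carry
  sleeping particles, each surviving jump wakes new particles with probability at least
  pi = m (K + 1) / (2 (n - 1)), so q^(number of active particles) is a supermartingale for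
  q = (1 - p) / (p pi); hence the process dies out in this regime with probability at most q.
  Otherwise the fraction of occupied vertices in W has fallen below m / 2. Landings remove
  uniformly distributed vertices from W, under which this fraction is a martingale; a quadratic
  potential bounds the probability of such a drop by O((1 / n + 1 / K) / m^2), the term 1 / n
  coming from the variance of the initial fraction. Since q tends to 0 as p tends to 1, the
  theorem follows.\<close>

section \<open>Supermartingales of the frog process\<close>

lemma atLeast0LessThan_Diff_singleton_ne_empty:
  assumes "2 \<le> (n::nat)"
  shows "{0..<n} - {x} \<noteq> {}"
proof -
  have "(if x = 0 then 1 else 0) \<in> {0..<n} - {x}"
    using assms by auto
  then show ?thesis by blast
qed

lemma set_pmf_frog_move_subset:
  assumes "2 \<le> n" and "M \<in> set_pmf (frog_move p n xs)"
  shows "set_mset M \<subseteq> {0..<n}"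
  using assms(2)
proof (induction xs arbitrary: M)
  case (Cons x xs)
  from Cons.prems show ?case
    using atLeast0LessThan_Diff_singleton_ne_empty[OF assms(1), of x]
    by (auto split: if_splits dest!: Cons.IH)
qed simp

definition frog_invar :: "nat \<Rightarrow> nat multiset \<times> nat set \<Rightarrow> bool" where
  "frog_invar n s \<longleftrightarrow> snd s \<subseteq> {0..<n} \<and> set_mset (fst s) \<subseteq> snd s"

lemma set_mset_sum_replicate_mset_subset:
  "finite F \<Longrightarrow> set_mset (\<Sum>v\<in>F. replicate_mset (k v) v) \<subseteq> F"
  by (induction F rule: finite_induct) auto

lemma size_sum_replicate_mset:
  "finite F \<Longrightarrow> size (\<Sum>v\<in>F. replicate_mset (k v) v) = (\<Sum>v\<in>F. k v)"
  by (induction F rule: finite_induct) auto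

lemma frog_state_0: "frog_state p n e 0 = return_pmf (frog_start e)"
  by (simp add: frog_state_def)

lemma frog_state_Suc: "frog_state p n e (Suc t) = frog_state p n e t \<bind> frog_step p n e"
  by (simp add: frog_state_def)

lemma frog_invar_step:
  assumes "2 \<le> n" "frog_invar n s" "s' \<in> set_pmf (frog_step p n e s)"
  shows "frog_invar n s'"
proof -
  from assms(3) obtain M where M: "M \<in> set_pmf (frog_move p n (sorted_list_of_multiset (fst s)))"
    and s': "s' = (M + (\<Sum>v\<in>set_mset M - snd s. replicate_mset (e v) v), snd s \<union> set_mset M)"
    by (auto simp: frog_step_def)
  have "set_mset (\<Sum>v\<in>set_mset M - snd s. replicate_mset (e v) v) \<subseteq> set_mset M"
    using set_mset_sum_replicate_mset_subset[of "set_mset M - snd s"] by auto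
  then show ?thesis
    using assms(2) set_pmf_frog_move_subset[OF assms(1) M] unfolding s' frog_invar_def by auto
qed

lemma frog_invar_state:
  assumes "2 \<le> n" and "s \<in> set_pmf (frog_state p n e t)"
  shows "frog_invar n s"
  using assms(2)
proof (induction t arbitrary: s)
  case 0
  then show ?case using assms(1) by (auto simp: frog_state_0 frog_start_def frog_invar_def)
next
  case (Suc t)
  then obtain s0 where "s0 \<in> set_pmf (frog_state p n e t)" "s \<in> set_pmf (frog_step p n e s0)"
    by (auto simp: frog_state_Suc)
  with Suc.IH show ?case using frog_invar_step[OF assms(1)] by blast
qed

lemma nn_integral_pmf_of_set_le:
  fixes f :: "'a \<Rightarrow> real"
  assumes S: "finite S" "S \<noteq> {}" and f: "\<And>y. 0 \<le> f y" and sum: "(\<Sum>y\<in>S. f y) \<le> c * real (card S)"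
  shows "(\<integral>\<^sup>+y. f y \<partial>pmf_of_set S) \<le> ennreal c"
proof -
  have "(\<integral>\<^sup>+y. f y \<partial>pmf_of_set S) = ennreal ((\<Sum>y\<in>S. f y) / card S)"
    using S f by (simp add: nn_integral_pmf_of_set divide_ennreal sum_nonneg card_gt_0_iff
        ennreal_of_nat_eq_real_of_nat)
  also have "\<dots> \<le> ennreal c"
    using S sum by (intro ennreal_leI) (simp add: divide_le_eq card_gt_0_iff)
  finally show ?thesis .
qed

lemma nn_integral_frog_move_le:
  fixes G :: "nat multiset \<Rightarrow> real"
  assumes n: "2 \<le> n" and p: "0 \<le> p" "p \<le> 1" and \<rho>: "0 \<le> \<rho>"
    and G_nonneg: "\<And>M. 0 \<le> G M"
    and xs: "set xs \<subseteq> {0..<n}"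
    and landing: "\<And>x M. x \<in> set xs \<Longrightarrow> set_mset M \<subseteq> {0..<n} \<Longrightarrow>
        (\<Sum>y\<in>{0..<n}-{x}. G (add_mset y M)) \<le> \<rho> * (real n - 1) * G M"
  shows "(\<integral>\<^sup>+M. G M \<partial>frog_move p n xs) \<le> ennreal ((1 - p + p * \<rho>) ^ length xs * G {#})"
  using xs landing
proof (induction xs)
  case (Cons x xs)
  define S where "S = {0..<n} - {x}"
  have card_S: "card S = n - 1"
    using Cons.prems(1) by (simp add: S_def)
  have S_ne: "S \<noteq> {}"
    using atLeast0LessThan_Diff_singleton_ne_empty[OF n] by (simp add: S_def)
  have IH: "(\<integral>\<^sup>+M. G M \<partial>frog_move p n xs) \<le> ennreal ((1 - p + p * \<rho>) ^ length xs * G {#})"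
    using Cons by auto
  have jump: "(\<integral>\<^sup>+y. G (add_mset y M) \<partial>pmf_of_set S) \<le> \<rho> * G M"
    if "M \<in> set_pmf (frog_move p n xs)" for M
  proof -
    have "(\<integral>\<^sup>+y. G (add_mset y M) \<partial>pmf_of_set S) \<le> ennreal (\<rho> * G M)"
      using Cons.prems(2)[of x M] set_pmf_frog_move_subset[OF n that] card_S n
      by (intro nn_integral_pmf_of_set_le S_ne G_nonneg) (simp_all add: S_def of_nat_diff mult_ac)
    then show ?thesis using \<rho> G_nonneg by (simp add: ennreal_mult)
  qed
  have "(\<integral>\<^sup>+M. G M \<partial>frog_move p n (x # xs)) =
      (\<integral>\<^sup>+M. (\<integral>\<^sup>+y. G (add_mset y M) \<partial>pmf_of_set S) \<partial>frog_move p n xs) * p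
      + (\<integral>\<^sup>+M. G M \<partial>frog_move p n xs) * (1 - p)"
    using p by (simp add: S_def)
  also have "\<dots> \<le> (\<integral>\<^sup>+M. \<rho> * G M \<partial>frog_move p n xs) * p + (\<integral>\<^sup>+M. G M \<partial>frog_move p n xs) * (1 - p)"
    by (intro add_mono mult_right_mono nn_integral_mono_AE AE_pmfI jump) auto
  also have "\<dots> = ennreal (1 - p + p * \<rho>) * (\<integral>\<^sup>+M. G M \<partial>frog_move p n xs)"
  proof -
    have "ennreal (1 - p + p * \<rho>) = ennreal \<rho> * p + (1 - p)"
      using p \<rho> by (simp add: ennreal_plus ennreal_mult mult.commute)
    then show ?thesis
      using \<rho> G_nonneg by (simp add: ennreal_mult nn_integral_cmult distrib_right ac_simps)
  qed
  also have "\<dots> \<le> ennreal (1 - p + p * \<rho>) * ennreal ((1 - p + p * \<rho>) ^ length xs * G {#})"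
    by (intro mult_left_mono IH) auto
  also have "\<dots> = ennreal ((1 - p + p * \<rho>) * ((1 - p + p * \<rho>) ^ length xs * G {#}))"
    using p \<rho> G_nonneg by (intro ennreal_mult[symmetric]) auto
  also have "\<dots> = ennreal ((1 - p + p * \<rho>) ^ length (x # xs) * G {#})"
    by (simp add: mult_ac)
  finally show ?case .
qed (use G_nonneg in simp)

lemma nn_integral_frog_step_le:
  fixes \<Phi> :: "nat multiset \<times> nat set \<Rightarrow> real" and G :: "nat multiset \<Rightarrow> real"
  assumes n: "2 \<le> n" and p: "0 \<le> p" "p \<le> 1" and \<rho>: "0 \<le> \<rho>" and invar: "frog_invar n s"
    and G_nonneg: "\<And>M. 0 \<le> G M"
    and dominated: "\<And>M. \<Phi> (M + (\<Sum>v\<in>set_mset M - snd s. replicate_mset (e v) v), snd s \<union> set_mset M) \<le> G M"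
    and landing: "\<And>x M. x \<in> snd s \<Longrightarrow> x < n \<Longrightarrow> set_mset M \<subseteq> {0..<n} \<Longrightarrow>
        (\<Sum>y\<in>{0..<n}-{x}. G (add_mset y M)) \<le> \<rho> * (real n - 1) * G M"
  shows "(\<integral>\<^sup>+s'. \<Phi> s' \<partial>frog_step p n e s) \<le> ennreal ((1 - p + p * \<rho>) ^ size (fst s) * G {#})"
proof -
  define xs where "xs = sorted_list_of_multiset (fst s)"
  have set_xs: "set xs \<subseteq> snd s" "set xs \<subseteq> {0..<n}" and length_xs: "length xs = size (fst s)"
    using invar by (auto simp: xs_def frog_invar_def simp flip: size_mset)
  have "(\<integral>\<^sup>+s'. \<Phi> s' \<partial>frog_step p n e s) \<le> (\<integral>\<^sup>+M. G M \<partial>frog_move p n xs)"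
    unfolding frog_step_def xs_def by (simp add: nn_integral_mono ennreal_leI dominated)
  also have "\<dots> \<le> ennreal ((1 - p + p * \<rho>) ^ length xs * G {#})"
    using set_xs by (intro nn_integral_frog_move_le[OF n p \<rho> G_nonneg] landing) auto
  finally show ?thesis by (simp only: length_xs)
qed

lemma nn_integral_frog_state_le:
  fixes f :: "nat multiset \<times> nat set \<Rightarrow> ennreal"
  assumes n: "2 \<le> n"
    and supermartingale: "\<And>s. frog_invar n s \<Longrightarrow> (\<integral>\<^sup>+s'. f s' \<partial>frog_step p n e s) \<le> \<gamma> * f s"
  shows "(\<integral>\<^sup>+s. f s \<partial>frog_state p n e t) \<le> \<gamma> ^ t * f (frog_start e)"
proof (induction t)
  case (Suc t)
  have "(\<integral>\<^sup>+s. f s \<partial>frog_state p n e (Suc t)) =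
      (\<integral>\<^sup>+s. (\<integral>\<^sup>+s'. f s' \<partial>frog_step p n e s) \<partial>frog_state p n e t)"
    by (simp add: frog_state_Suc)
  also have "\<dots> \<le> (\<integral>\<^sup>+s. \<gamma> * f s \<partial>frog_state p n e t)"
    by (intro nn_integral_mono_AE AE_pmfI supermartingale frog_invar_state[OF n])
  also have "\<dots> \<le> \<gamma> * (\<gamma> ^ t * f (frog_start e))"
    by (simp add: nn_integral_cmult mult_left_mono Suc.IH)
  finally show ?case by (simp add: mult.assoc)
qed (simp add: frog_state_0)

lemma nn_integral_frog_state_le_start:
  fixes f :: "nat multiset \<times> nat set \<Rightarrow> ennreal"
  assumes "2 \<le> n"
    and "\<And>s. frog_invar n s \<Longrightarrow> (\<integral>\<^sup>+s'. f s' \<partial>frog_step p n e s) \<le> f s"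
  shows "(\<integral>\<^sup>+s. f s \<partial>frog_state p n e t) \<le> f (frog_start e)"
  using nn_integral_frog_state_le[of n p e f 1 t] assms by simp

definition unvisited :: "nat \<Rightarrow> nat set \<Rightarrow> nat set" where
  "unvisited n V = {0..<n} - V"

definition occupied :: "(nat \<Rightarrow> nat) \<Rightarrow> nat set \<Rightarrow> nat set" where
  "occupied e U = {v \<in> U. e v \<noteq> 0}"

lemma unvisited_Un: "unvisited n (V \<union> X) = unvisited n V - X"
  by (auto simp: unvisited_def)

lemma Diff_set_mset_add_mset: "A - set_mset (add_mset y M) = A - set_mset M - {y}"
  by auto

lemma card_unvisited: "V \<subseteq> {0..<n} \<Longrightarrow> card (unvisited n V) = n - card V"
  by (simp add: unvisited_def card_Diff_subset finite_subset)

lemma sum_le_split_bound: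
  fixes f :: "'a \<Rightarrow> real"
  assumes "finite S" "U \<subseteq> S" "\<And>y. y \<in> U \<Longrightarrow> f y \<le> a" "\<And>y. y \<in> S - U \<Longrightarrow> f y \<le> b"
  shows "sum f S \<le> real (card U) * a + (real (card S) - real (card U)) * b"
proof -
  have "finite U" using assms(1,2) finite_subset by blast
  have "sum f S = sum f U + sum f (S - U)"
    using sum.subset_diff[OF assms(2,1)] by (simp add: add.commute)
  also have "\<dots> \<le> real (card U) * a + real (card (S - U)) * b"
    using sum_bounded_above[of U f a] sum_bounded_above[of "S - U" f b] assms(3,4)
    by (intro add_mono) auto
  also have "real (card (S - U)) = real (card S) - real (card U)"
    using card_Diff_subset[OF \<open>finite U\<close> assms(2)] card_mono[OF assms(1,2)] by simp
  finally show ?thesis .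
qed

section \<open>Geometric decay while particles are active\<close>

definition pow2_card_above :: "nat \<Rightarrow> nat set \<Rightarrow> real" where
  "pow2_card_above K U = (if K < card U then 2 ^ card U else 0)"

lemma pow2_card_above_nonneg: "0 \<le> pow2_card_above K U"
  by (simp add: pow2_card_above_def)

lemma sum_pow2_card_above_remove_le:
  assumes S: "finite S" and U: "U \<subseteq> S"
  shows "(\<Sum>y\<in>S. pow2_card_above K (U - {y})) \<le> (real (card S) - (real K + 1) / 2) * pow2_card_above K U"
proof (cases "K < card U")
  case True
  have fin_U: "finite U" using S U finite_subset by blast
  have "(\<Sum>y\<in>S. pow2_card_above K (U - {y})) \<le>
      real (card U) * (2 ^ card U / 2) + (real (card S) - real (card U)) * 2 ^ card U"
  proof (rule sum_le_split_bound[OF S U])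
    fix y assume "y \<in> U"
    then have "card (U - {y}) = card U - 1" using fin_U by simp
    moreover have "(2::real) ^ (card U - 1) = 2 ^ card U / 2"
      using True by (simp add: power_diff)
    ultimately show "pow2_card_above K (U - {y}) \<le> 2 ^ card U / 2"
      by (simp add: pow2_card_above_def)
  next
    fix y assume "y \<in> S - U"
    then show "pow2_card_above K (U - {y}) \<le> 2 ^ card U"
      by (simp add: pow2_card_above_def)
  qed
  also have "\<dots> = (real (card S) - real (card U) / 2) * 2 ^ card U"
    by (simp add: algebra_simps)
  also have "\<dots> \<le> (real (card S) - (real K + 1) / 2) * 2 ^ card U"
    using True by (intro mult_right_mono) auto
  finally show ?thesis using True by (simp add: pow2_card_above_def)
next
  case False
  have "pow2_card_above K (U - {y}) = 0" for y
    using False card_Diff1_le[of U y] S U finite_subset by (fastforce simp: pow2_card_above_def)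
  then show ?thesis using False by (simp add: pow2_card_above_def)
qed

definition active_potential :: "nat \<Rightarrow> nat \<Rightarrow> nat multiset \<times> nat set \<Rightarrow> real" where
  "active_potential n K s = (if fst s = {#} then 0 else pow2_card_above K (unvisited n (snd s)))"

lemma active_potential_nonneg: "0 \<le> active_potential n K s"
  by (simp add: active_potential_def pow2_card_above_nonneg)

definition active_decay :: "real \<Rightarrow> nat \<Rightarrow> nat \<Rightarrow> real" where
  "active_decay p n K = 1 - p * (real K + 1) / (2 * (real n - 1))"

lemma active_decay_nonneg:
  assumes "2 \<le> n" "K < n" "0 \<le> p" "p \<le> 1"
  shows "0 \<le> active_decay p n K"
proof -
  have "p * (real K + 1) \<le> real K + 1"
    using assms by (intro mult_left_le_one_le) auto
  then show ?thesis using assms by (simp add: active_decay_def field_simps)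
qed

lemma active_decay_le_1: "2 \<le> n \<Longrightarrow> 0 \<le> p \<Longrightarrow> active_decay p n K \<le> 1"
  by (simp add: active_decay_def)

lemma active_decay_less_1: "2 \<le> n \<Longrightarrow> 0 < p \<Longrightarrow> active_decay p n K < 1"
  by (simp add: active_decay_def)

lemma active_potential_step:
  assumes n: "2 \<le> n" and K: "K < n" and p: "0 \<le> p" "p \<le> 1" and invar: "frog_invar n s"
  shows "(\<integral>\<^sup>+s'. active_potential n K s' \<partial>frog_step p n e s) \<le> ennreal (active_decay p n K) * active_potential n K s"
proof (cases "fst s = {#}")
  case True
  then show ?thesis by (simp add: frog_step_def active_potential_def)
next
  case False
  define \<rho> where "\<rho> = 1 - (real K + 1) / (2 * (real n - 1))"
  define G where "G M = pow2_card_above K (unvisited n (snd s) - set_mset M)" for M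
  have \<rho>: "0 \<le> \<rho>" using n K by (simp add: \<rho>_def field_simps)
  have decay: "1 - p + p * \<rho> = active_decay p n K"
    by (simp add: \<rho>_def active_decay_def right_diff_distrib)
  have "(\<integral>\<^sup>+s'. active_potential n K s' \<partial>frog_step p n e s) \<le> ennreal (active_decay p n K ^ size (fst s) * G {#})"
    unfolding decay[symmetric]
  proof (rule nn_integral_frog_step_le[OF n p \<rho> invar])
    fix x M assume x: "x \<in> snd s" "x < n" and "set_mset M \<subseteq> {0..<n}"
    define U where "U = unvisited n (snd s) - set_mset M"
    have "U \<subseteq> {0..<n} - {x}"
      using x by (auto simp: U_def unvisited_def)
    moreover have "G (add_mset y M) = pow2_card_above K (U - {y})" for y
      by (simp only: G_def U_def Diff_set_mset_add_mset)
    moreover have "real (card ({0..<n} - {x})) - (real K + 1) / 2 = \<rho> * (real n - 1)"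
      using x n by (simp add: \<rho>_def of_nat_diff field_simps)
    ultimately show "(\<Sum>y\<in>{0..<n}-{x}. G (add_mset y M)) \<le> \<rho> * (real n - 1) * G M"
      using sum_pow2_card_above_remove_le[of "{0..<n} - {x}" U K] by (simp add: G_def U_def)
  qed (auto simp: G_def active_potential_def unvisited_Un pow2_card_above_nonneg)
  also have "\<dots> \<le> ennreal (active_decay p n K * active_potential n K s)"
  proof (intro ennreal_leI mult_mono)
    have "1 \<le> size (fst s)" using False by (simp add: Suc_le_eq nonempty_has_size)
    then show "active_decay p n K ^ size (fst s) \<le> active_decay p n K"
      using power_decreasing[of 1 "size (fst s)" "active_decay p n K"]
        active_decay_nonneg[OF n K p] active_decay_le_1[OF n p(1)] by simp
  qed (use False active_decay_nonneg[OF n K p] in \<open>simp_all add: G_def active_potential_def pow2_card_above_nonneg\<close>)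
  also have "\<dots> = ennreal (active_decay p n K) * active_potential n K s"
    using active_decay_nonneg[OF n K p] by (simp add: ennreal_mult')
  finally show ?thesis .
qed

lemma active_potential_start_le: "active_potential n K (frog_start e) \<le> 2 ^ n"
proof -
  have "card (unvisited n {0}) \<le> n"
    using card_Diff1_le[of "{0..<n}" 0] by (simp add: unvisited_def)
  then show ?thesis
    by (simp add: active_potential_def frog_start_def pow2_card_above_def)
qed

lemma nn_integral_active_potential_frog_state_le:
  assumes n: "2 \<le> n" and K: "K < n" and p: "0 \<le> p" "p \<le> 1"
  shows "(\<integral>\<^sup>+s. active_potential n K s \<partial>frog_state p n e t) \<le> ennreal (active_decay p n K ^ t * 2 ^ n)"
proof -
  have "(\<integral>\<^sup>+s. active_potential n K s \<partial>frog_state p n e t)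
      \<le> ennreal (active_decay p n K) ^ t * active_potential n K (frog_start e)"
    by (rule nn_integral_frog_state_le[OF n active_potential_step[OF n K p]])
  also have "\<dots> = ennreal (active_decay p n K ^ t * active_potential n K (frog_start e))"
    using active_decay_nonneg[OF n K p] by (simp add: ennreal_power ennreal_mult active_potential_nonneg)
  also have "\<dots> \<le> ennreal (active_decay p n K ^ t * 2 ^ n)"
    using active_decay_nonneg[OF n K p] by (intro ennreal_leI mult_left_mono active_potential_start_le) simp
  finally show ?thesis .
qed

section \<open>Extinction while many unvisited vertices are occupied\<close>

definition next_active_count :: "(nat \<Rightarrow> nat) \<Rightarrow> nat set \<Rightarrow> nat multiset \<Rightarrow> nat" where
  "next_active_count e V M = size M + (\<Sum>v\<in>set_mset M - V. e v)"

lemma power_next_active_count_add_mset_le: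
  fixes q :: real
  assumes "0 \<le> q" "q \<le> 1"
  shows "q ^ next_active_count e V (add_mset y M) \<le> q * q ^ next_active_count e V M"
proof -
  have "(\<Sum>v\<in>set_mset M - V. e v) \<le> (\<Sum>v\<in>insert y (set_mset M) - V. e v)"
    by (rule sum_mono2) auto
  then have "next_active_count e V M + 1 \<le> next_active_count e V (add_mset y M)"
    by (simp add: next_active_count_def)
  from power_decreasing[OF this, of q] show ?thesis
    using assms by (simp add: mult.commute)
qed

lemma power_next_active_count_add_mset_occupied_le:
  fixes q :: real
  assumes "0 \<le> q" "q \<le> 1" "y \<notin># M" "y \<notin> V" "e y \<noteq> 0"
  shows "q ^ next_active_count e V (add_mset y M) \<le> q\<^sup>2 * q ^ next_active_count e V M"
proof -
  have "insert y (set_mset M) - V = insert y (set_mset M - V)"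
    using assms by auto
  then have "next_active_count e V M + 2 \<le> next_active_count e V (add_mset y M)"
    using assms by (simp add: next_active_count_def)
  from power_decreasing[OF this, of q] show ?thesis
    using assms by (simp add: power_add power2_eq_square mult_ac)
qed

definition extinction_potential :: "nat \<Rightarrow> real \<Rightarrow> real \<Rightarrow> (nat \<Rightarrow> nat) \<Rightarrow> nat multiset \<times> nat set \<Rightarrow> real" where
  "extinction_potential n \<pi> q e s =
    (if \<pi> * (real n - 1) < real (card (occupied e (unvisited n (snd s)))) then q ^ size (fst s) else 0)"

lemma extinction_potential_nonneg: "0 \<le> q \<Longrightarrow> 0 \<le> extinction_potential n \<pi> q e s"
  by (simp add: extinction_potential_def)

lemma extinction_landing_le:
  fixes \<pi> q :: real and e :: "nat \<Rightarrow> nat" and V :: "nat set" and M :: "nat multiset"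
  assumes n: "2 \<le> n" and x: "x \<in> V" "x < n" and q: "0 \<le> q" "q \<le> 1"
  defines "G \<equiv> \<lambda>M. if \<pi> * (real n - 1) < real (card (occupied e (unvisited n V - set_mset M)))
      then q ^ next_active_count e V M else 0"
  shows "(\<Sum>y\<in>{0..<n}-{x}. G (add_mset y M)) \<le> q * (1 - \<pi> * (1 - q)) * (real n - 1) * G M"
proof -
  define U where "U = unvisited n V - set_mset M"
  define Occ where "Occ = occupied e U"
  have Occ: "Occ \<subseteq> {0..<n} - {x}" "finite Occ"
    using x by (auto simp: Occ_def U_def occupied_def unvisited_def)
  have G_add: "G (add_mset y M) = (if \<pi> * (real n - 1) < real (card (occupied e (U - {y})))
      then q ^ next_active_count e V (add_mset y M) else 0)" for y
    by (simp only: G_def U_def Diff_set_mset_add_mset)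
  show ?thesis
  proof (cases "\<pi> * (real n - 1) < real (card Occ)")
    case True
    have GM: "G M = q ^ next_active_count e V M"
      using True by (simp add: G_def Occ_def U_def)
    have "(\<Sum>y\<in>{0..<n}-{x}. G (add_mset y M)) \<le>
        real (card Occ) * (q\<^sup>2 * G M) + (real (card ({0..<n}-{x})) - real (card Occ)) * (q * G M)"
    proof (rule sum_le_split_bound[OF _ Occ(1)])
      fix y assume "y \<in> Occ"
      then show "G (add_mset y M) \<le> q\<^sup>2 * G M"
        using power_next_active_count_add_mset_occupied_le[OF q, of y M V e] q
        by (auto simp: G_add GM Occ_def U_def occupied_def unvisited_def)
    next
      fix y
      show "G (add_mset y M) \<le> q * G M"
        using power_next_active_count_add_mset_le[OF q, of e V y M] q by (simp add: G_add GM)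
    qed simp
    also have "\<dots> = q * G M * ((real n - 1) - real (card Occ) * (1 - q))"
      using x n by (simp add: of_nat_diff algebra_simps power2_eq_square)
    also have "\<dots> \<le> q * G M * ((real n - 1) - \<pi> * (real n - 1) * (1 - q))"
      using True q by (intro mult_left_mono diff_left_mono mult_right_mono) (auto simp: GM)
    also have "\<dots> = q * (1 - \<pi> * (1 - q)) * (real n - 1) * G M"
      by (simp add: algebra_simps)
    finally show ?thesis .
  next
    case False
    have "card (occupied e (U - {y})) \<le> card Occ" for y
      using Occ(2) by (intro card_mono) (auto simp: Occ_def occupied_def)
    then have "G (add_mset y M) = 0" for y
      using False by (simp add: G_add) (meson of_nat_le_iff order.trans not_less)
    moreover have "G M = 0"
      using False by (simp add: G_def Occ_def U_def)
    ultimately show ?thesis by simp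
  qed
qed

lemma extinction_potential_step:
  assumes n: "2 \<le> n" and \<pi>: "0 \<le> \<pi>" "\<pi> \<le> 1" and p: "0 \<le> p" "p \<le> 1"
    and q: "0 \<le> q" "q \<le> 1" and rate: "1 - p + p * (q * (1 - \<pi> * (1 - q))) \<le> q"
    and invar: "frog_invar n s"
  shows "(\<integral>\<^sup>+s'. extinction_potential n \<pi> q e s' \<partial>frog_step p n e s) \<le> extinction_potential n \<pi> q e s"
proof -
  define \<rho> where "\<rho> = q * (1 - \<pi> * (1 - q))"
  define G where "G M = (if \<pi> * (real n - 1) < real (card (occupied e (unvisited n (snd s) - set_mset M)))
      then q ^ next_active_count e (snd s) M else 0)" for M
  have "\<pi> * (1 - q) \<le> 1 * 1"
    using \<pi> q by (intro mult_mono) auto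
  then have \<rho>: "0 \<le> \<rho>" using q by (simp add: \<rho>_def)
  have "(\<integral>\<^sup>+s'. extinction_potential n \<pi> q e s' \<partial>frog_step p n e s)
      \<le> ennreal ((1 - p + p * \<rho>) ^ size (fst s) * G {#})"
  proof (rule nn_integral_frog_step_le[OF n p \<rho> invar])
    show "0 \<le> G M" for M using q by (simp add: G_def)
  next
    fix M
    show "extinction_potential n \<pi> q e (M + (\<Sum>v\<in>set_mset M - snd s. replicate_mset (e v) v),
        snd s \<union> set_mset M) \<le> G M"
      by (simp add: extinction_potential_def G_def unvisited_Un size_sum_replicate_mset
          next_active_count_def)
  next
    fix x M assume "x \<in> snd s" "x < n"
    then show "(\<Sum>y\<in>{0..<n}-{x}. G (add_mset y M)) \<le> \<rho> * (real n - 1) * G M"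
      unfolding G_def \<rho>_def by (rule extinction_landing_le[OF n _ _ q])
  qed
  also have "\<dots> \<le> ennreal (q ^ size (fst s) * G {#})"
    using rate p \<rho> q by (intro ennreal_leI mult_right_mono power_mono) (auto simp: \<rho>_def G_def)
  also have "q ^ size (fst s) * G {#} = extinction_potential n \<pi> q e s"
    by (simp add: G_def extinction_potential_def next_active_count_def)
  finally show ?thesis .
qed

lemma extinction_potential_start_le: "0 \<le> q \<Longrightarrow> q \<le> 1 \<Longrightarrow> extinction_potential n \<pi> q e (frog_start e) \<le> q"
  by (simp add: extinction_potential_def frog_start_def mult_left_le power_le_one)

lemma extinction_rate_supersolution:
  fixes p \<pi> :: real
  assumes "0 < p" "p \<le> 1" "0 < \<pi>"
  defines "q \<equiv> min 1 ((1 - p) / (p * \<pi>))"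
  shows "0 \<le> q" "q \<le> 1" "1 - p + p * (q * (1 - \<pi> * (1 - q))) \<le> q"
proof -
  show "0 \<le> q" "q \<le> 1" using assms by (simp_all add: q_def)
  show "1 - p + p * (q * (1 - \<pi> * (1 - q))) \<le> q"
  proof (cases "1 \<le> (1 - p) / (p * \<pi>)")
    case False
    then have fixed_point: "p * q * \<pi> = 1 - p" using assms by (simp add: q_def)
    have "p * (q * (1 - \<pi> * (1 - q))) = p * q - p * q * \<pi> + p * q * \<pi> * q"
      by (simp add: algebra_simps)
    then show ?thesis unfolding fixed_point by (simp add: algebra_simps)
  qed (simp add: q_def)
qed

section \<open>Density of occupied vertices among the unvisited ones\<close>

definition density_potential :: "nat \<Rightarrow> real \<Rightarrow> (nat \<Rightarrow> nat) \<Rightarrow> nat set \<Rightarrow> real" where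
  "density_potential K m e U =
    (if K < card U
     then (real (card (occupied e U)) / real (card U) - m)\<^sup>2 + 1 / (real K - 1) - 1 / (real (card U) - 1)
     else 0)"

lemma density_potential_nonneg:
  assumes "2 \<le> K"
  shows "0 \<le> density_potential K m e U"
proof -
  have "K < card U \<Longrightarrow> 1 / (real (card U) - 1) \<le> 1 / (real K - 1)"
    using assms by (intro divide_left_mono) auto
  then show ?thesis
    by (simp add: density_potential_def add_increasing)
qed

text \<open>The fraction \<open>a / c\<close> is a martingale when a uniformly chosen element is removed, and its
  conditional variance \<open>a (c - a) / (c (c - 1)\<^sup>2)\<close> is at most \<open>1 / (c - 2) - 1 / (c - 1)\<close>.\<close>
lemma remove_uniform_sq_dev_le:
  fixes a c m K :: real
  assumes "0 \<le> a" "a \<le> c" "3 \<le> c"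
  shows "a * ((a - 1) / (c - 1) - m)\<^sup>2 + (c - a) * (a / (c - 1) - m)\<^sup>2 + c * (1 / (K - 1) - 1 / (c - 2))
    \<le> c * ((a / c - m)\<^sup>2 + 1 / (K - 1) - 1 / (c - 1))"
proof -
  have c: "c - 1 \<noteq> 0" "c \<noteq> 0" "c - 2 \<noteq> 0" using assms by auto
  have variance: "a * ((a - 1) / (c - 1) - m)\<^sup>2 + (c - a) * (a / (c - 1) - m)\<^sup>2
      = c * (a / c - m)\<^sup>2 + a * (c - a) / (c * (c - 1)\<^sup>2)"
    using c by (simp add: field_simps) (simp add: algebra_simps power2_eq_square power4_eq_xxxx)
  have "a * (c - a) \<le> c\<^sup>2 / 4"
    using zero_le_power2[of "c - 2 * a"] unfolding power2_eq_square by (simp add: algebra_simps)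
  then have "a * (c - a) / (c * (c - 1)\<^sup>2) \<le> (c\<^sup>2 / 4) / (c * (c - 1)\<^sup>2)"
    using assms by (intro divide_right_mono) auto
  also have "\<dots> = c / (4 * (c - 1)\<^sup>2)"
    using c by (simp add: field_simps power2_eq_square[of c])
  also have "\<dots> \<le> c / ((c - 1) * (c - 2))"
  proof (rule divide_left_mono)
    have "(c - 1) * (c - 2) \<le> (c - 1) * (4 * (c - 1))"
      by (rule mult_left_mono) (use assms in auto)
    then show "(c - 1) * (c - 2) \<le> 4 * (c - 1)\<^sup>2" by (simp add: power2_eq_square mult_ac)
  qed (use assms in auto)
  also have "\<dots> = c * (1 / (c - 2) - 1 / (c - 1))"
    using c by (simp add: field_simps)
  finally show ?thesis unfolding variance by (simp add: algebra_simps)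
qed

lemma density_potential_remove:
  assumes U: "finite U" "w \<in> U" and K: "K + 1 < card U"
  shows "density_potential K m e (U - {w}) =
    ((real (card (occupied e U)) - of_bool (w \<in> occupied e U)) / (real (card U) - 1) - m)\<^sup>2
      + (1 / (real K - 1) - 1 / (real (card U) - 2))"
proof -
  have "occupied e (U - {w}) = occupied e U - {w}"
    by (auto simp: occupied_def)
  moreover have "finite (occupied e U)"
    using U by (simp add: occupied_def)
  moreover have "w \<in> occupied e U \<Longrightarrow> 1 \<le> card (occupied e U)"
    by (auto simp: Suc_le_eq card_gt_0_iff \<open>finite (occupied e U)\<close>)
  moreover have "card (U - {w}) = card U - 1" "K < card U - 1"
    using U K by auto
  ultimately show ?thesis
    using U K by (simp add: density_potential_def of_nat_diff)
qed

lemma sum_density_potential_remove_le: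
  assumes K: "2 \<le> K" and U: "finite U"
  shows "(\<Sum>w\<in>U. density_potential K m e (U - {w})) \<le> real (card U) * density_potential K m e U"
proof -
  define c where "c = card U"
  define a where "a = card (occupied e U)"
  define B where "B = 1 / (real K - 1) - 1 / (real c - 2)"
  have occ: "occupied e U \<subseteq> U" by (auto simp: occupied_def)
  have "a \<le> c" unfolding a_def c_def using U occ by (rule card_mono)
  consider "c \<le> K + 1" | "K + 1 < c" by linarith
  then show ?thesis
  proof cases
    case 1
    have "density_potential K m e (U - {w}) = 0" if "w \<in> U" for w
      using 1 U that by (simp add: density_potential_def c_def)
    then show ?thesis
      by (simp add: mult_nonneg_nonneg density_potential_nonneg[OF K])
  next
    case 2
    have "(\<Sum>w\<in>U. density_potential K m e (U - {w})) \<le>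
        real a * (((real a - 1) / (real c - 1) - m)\<^sup>2 + B) + (real c - real a) * ((real a / (real c - 1) - m)\<^sup>2 + B)"
      unfolding a_def c_def B_def
      using density_potential_remove[OF U _ 2[unfolded c_def]] occ
      by (intro sum_le_split_bound[OF U occ]) (auto dest: subsetD[OF occ])
    also have "\<dots> \<le> real c * ((real a / real c - m)\<^sup>2 + 1 / (real K - 1) - 1 / (real c - 1))"
      using remove_uniform_sq_dev_le[of "real a" "real c" m "real K"] \<open>a \<le> c\<close> 2 K
      by (simp add: B_def algebra_simps diff_divide_distrib)
    also have "\<dots> = real (card U) * density_potential K m e U"
      using 2 by (simp add: density_potential_def a_def c_def)
    finally show ?thesis .
  qed
qed

lemma sum_density_potential_remove_superset_le:
  assumes K: "2 \<le> K" and S: "finite S" and U: "U \<subseteq> S"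
  shows "(\<Sum>y\<in>S. density_potential K m e (U - {y})) \<le> real (card S) * density_potential K m e U"
proof -
  have "finite U" using S U finite_subset by blast
  have "(\<Sum>y\<in>S - U. density_potential K m e (U - {y})) = (\<Sum>y\<in>S - U. density_potential K m e U)"
    by (rule sum.cong) auto
  then have "(\<Sum>y\<in>S. density_potential K m e (U - {y})) =
      (\<Sum>y\<in>U. density_potential K m e (U - {y})) + (\<Sum>y\<in>S - U. density_potential K m e U)"
    using sum.subset_diff[OF U S, of "\<lambda>y. density_potential K m e (U - {y})"] by simp
  also have "\<dots> \<le> real (card U) * density_potential K m e U + real (card (S - U)) * density_potential K m e U"
    using sum_density_potential_remove_le[OF K \<open>finite U\<close>] by simp
  also have "\<dots> = real (card S) * density_potential K m e U"
    using card_Diff_subset[OF \<open>finite U\<close> U] card_mono[OF S U] by (simp add: of_nat_diff algebra_simps)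
  finally show ?thesis .
qed

lemma density_potential_step:
  assumes n: "2 \<le> n" and K: "2 \<le> K" and p: "0 \<le> p" "p \<le> 1" and invar: "frog_invar n s"
  shows "(\<integral>\<^sup>+s'. density_potential K m e (unvisited n (snd s')) \<partial>frog_step p n e s)
    \<le> density_potential K m e (unvisited n (snd s))"
proof -
  define G where "G M = density_potential K m e (unvisited n (snd s) - set_mset M)" for M
  have "(\<integral>\<^sup>+s'. density_potential K m e (unvisited n (snd s')) \<partial>frog_step p n e s)
      \<le> ennreal ((1 - p + p * 1) ^ size (fst s) * G {#})"
  proof (rule nn_integral_frog_step_le[OF n p _ invar])
    fix x M assume x: "x \<in> snd s" "x < n"
    define U where "U = unvisited n (snd s) - set_mset M"
    have "U \<subseteq> {0..<n} - {x}"
      using x by (auto simp: U_def unvisited_def)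
    moreover have "G (add_mset y M) = density_potential K m e (U - {y})" for y
      by (simp only: G_def U_def Diff_set_mset_add_mset)
    ultimately show "(\<Sum>y\<in>{0..<n}-{x}. G (add_mset y M)) \<le> 1 * (real n - 1) * G M"
      using sum_density_potential_remove_superset_le[OF K, of "{0..<n} - {x}" U m e] x
      by (simp add: G_def U_def of_nat_diff)
  qed (simp_all add: G_def unvisited_Un density_potential_nonneg[OF K])
  also have "\<dots> = density_potential K m e (unvisited n (snd s))"
    by (simp add: G_def)
  finally show ?thesis .
qed

lemma one_le_density_potential:
  assumes K: "2 \<le> K" and m: "0 < m" and U: "K < card U"
    and sparse: "2 * real (card (occupied e U)) \<le> m * (real K + 1)"
  shows "1 \<le> 4 / m\<^sup>2 * density_potential K m e U"
proof -
  define a where "a = real (card (occupied e U))"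
  define c where "c = real (card U)"
  have c: "real K + 1 \<le> c" using U by (simp add: c_def)
  then have "m * (real K + 1) \<le> m * c" using m by (intro mult_left_mono) auto
  then have "a / c \<le> m / 2" using sparse c K by (simp add: a_def field_simps)
  moreover have "0 \<le> a / c" by (simp add: a_def c_def)
  ultimately have "(m / 2)\<^sup>2 \<le> (m - a / c)\<^sup>2"
    using m by (intro power_mono) auto
  also have "\<dots> = (a / c - m)\<^sup>2"
    by (rule power2_commute)
  also have "\<dots> \<le> density_potential K m e U"
  proof -
    have "1 / (c - 1) \<le> 1 / (real K - 1)"
      using c K by (intro divide_left_mono) auto
    then show ?thesis
      using U by (simp add: density_potential_def a_def c_def)
  qed
  finally show ?thesis
    using m by (simp add: field_simps power2_eq_square)
qed

section \<open>The initial configuration\<close>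

lemma integrable_measure_pmf_bounded:
  fixes f :: "'a \<Rightarrow> real"
  shows "(\<And>x. \<bar>f x\<bar> \<le> c) \<Longrightarrow> integrable (measure_pmf P) f"
  by (intro measure_pmf.integrable_const_bound[where B = c]) auto

lemma expectation_Pi_pmf_component:
  fixes f :: "'b \<Rightarrow> real"
  assumes "finite A" "v \<in> A"
  shows "(\<integral>e. f (e v) \<partial>Pi_pmf A d (\<lambda>_. D)) = (\<integral>k. f k \<partial>D)"
proof -
  have "map_pmf (\<lambda>e. e v) (Pi_pmf A d (\<lambda>_. D)) = D"
    using Pi_pmf_component[OF assms(1), of v d "\<lambda>_. D"] assms(2) by simp
  then show ?thesis
    by (metis integral_map_pmf)
qed

lemma expectation_Pi_pmf_component_pair:
  fixes f :: "'b \<Rightarrow> real"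
  assumes "finite A" "v \<in> A" "w \<in> A" "v \<noteq> w" and f: "\<And>k. 0 \<le> f k" "\<And>k. f k \<le> 1"
  shows "(\<integral>e. f (e v) * f (e w) \<partial>Pi_pmf A d (\<lambda>_. D)) = (\<integral>k. f k \<partial>D)\<^sup>2"
proof -
  define g where "g x k = (if x = v \<or> x = w then f k else 1)" for x k
  have restrict: "(\<Prod>x\<in>A. h x) = (\<Prod>x\<in>{v, w}. h x)" if "\<And>x. x \<notin> {v, w} \<Longrightarrow> h x = 1" for h :: "'a \<Rightarrow> real"
    using assms(1-3) that by (intro prod.mono_neutral_right) auto
  have "(\<integral>e. f (e v) * f (e w) \<partial>Pi_pmf A d (\<lambda>_. D)) = (\<integral>e. (\<Prod>x\<in>A. g x (e x)) \<partial>Pi_pmf A d (\<lambda>_. D))"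
    using restrict[of "\<lambda>x. g x (_ x)"] assms(4) by (simp add: g_def)
  also have "\<dots> = (\<Prod>x\<in>A. \<integral>k. g x k \<partial>D)"
    using f by (intro expectation_prod_Pi_pmf[OF assms(1)] integrable_measure_pmf_bounded[where c = 1])
      (auto simp: g_def abs_le_iff intro: order_trans[of _ 0])
  also have "\<dots> = (\<integral>k. f k \<partial>D)\<^sup>2"
    using restrict[of "\<lambda>x. \<integral>k. g x k \<partial>D"] assms(4) by (simp add: g_def power2_eq_square)
  finally show ?thesis .
qed

lemma expectation_Pi_pmf_sum:
  fixes f :: "'b \<Rightarrow> real"
  assumes A: "finite A" "B \<subseteq> A" and f: "\<And>k. \<bar>f k\<bar> \<le> c"
  shows "(\<integral>e. (\<Sum>v\<in>B. f (e v)) \<partial>Pi_pmf A d (\<lambda>_. D)) = real (card B) * (\<integral>k. f k \<partial>D)"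
proof -
  have "(\<integral>e. (\<Sum>v\<in>B. f (e v)) \<partial>Pi_pmf A d (\<lambda>_. D)) = (\<Sum>v\<in>B. \<integral>e. f (e v) \<partial>Pi_pmf A d (\<lambda>_. D))"
    using f by (intro Bochner_Integration.integral_sum integrable_measure_pmf_bounded) auto
  also have "\<dots> = (\<Sum>v\<in>B. \<integral>k. f k \<partial>D)"
    using A by (intro sum.cong refl) (auto simp: expectation_Pi_pmf_component)
  finally show ?thesis by simp
qed

lemma expectation_Pi_pmf_sum_sq:
  fixes f :: "'b \<Rightarrow> real"
  assumes A: "finite A" "B \<subseteq> A" and f: "\<And>k. 0 \<le> f k" "\<And>k. f k \<le> 1"
  shows "(\<integral>e. (\<Sum>v\<in>B. f (e v))\<^sup>2 \<partial>Pi_pmf A d (\<lambda>_. D)) =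
    real (card B) * (\<integral>k. (f k)\<^sup>2 \<partial>D) + real (card B) * (real (card B) - 1) * (\<integral>k. f k \<partial>D)\<^sup>2"
proof -
  define P where "P = Pi_pmf A d (\<lambda>_. D)"
  have B: "finite B" using A finite_subset by blast
  have integrable: "integrable P (\<lambda>e. f (e v) * f (e w))" for v w
    using f by (intro integrable_measure_pmf_bounded[where c = 1]) (simp add: abs_mult mult_le_one)
  have row: "(\<Sum>w\<in>B. \<integral>e. f (e v) * f (e w) \<partial>P) =
      (\<integral>k. (f k)\<^sup>2 \<partial>D) + (real (card B) - 1) * (\<integral>k. f k \<partial>D)\<^sup>2" if v: "v \<in> B" for v
  proof -
    have "(\<Sum>w\<in>B. \<integral>e. f (e v) * f (e w) \<partial>P) =
        (\<integral>e. f (e v) * f (e v) \<partial>P) + (\<Sum>w\<in>B - {v}. \<integral>e. f (e v) * f (e w) \<partial>P)"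
      using v B by (simp add: sum.remove)
    also have "(\<integral>e. f (e v) * f (e v) \<partial>P) = (\<integral>k. (f k)\<^sup>2 \<partial>D)"
      using expectation_Pi_pmf_component[OF A(1), where v = v and f = "\<lambda>k. (f k)\<^sup>2"] v A(2)
      by (auto simp: P_def power2_eq_square)
    also have "(\<Sum>w\<in>B - {v}. \<integral>e. f (e v) * f (e w) \<partial>P) = (\<Sum>w\<in>B - {v}. (\<integral>k. f k \<partial>D)\<^sup>2)"
      using v A(2) by (intro sum.cong refl) (auto simp: P_def intro: expectation_Pi_pmf_component_pair[OF A(1) _ _ _ f])
    also have "\<dots> = (real (card B) - 1) * (\<integral>k. f k \<partial>D)\<^sup>2"
    proof -
      have "0 < card B" using v B card_gt_0_iff by blast
      then show ?thesis using v B by (simp add: of_nat_diff)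
    qed
    finally show ?thesis .
  qed
  have "(\<integral>e. (\<Sum>v\<in>B. f (e v))\<^sup>2 \<partial>P) = (\<integral>e. (\<Sum>v\<in>B. \<Sum>w\<in>B. f (e v) * f (e w)) \<partial>P)"
    by (simp add: power2_eq_square sum_product)
  also have "\<dots> = (\<Sum>v\<in>B. \<Sum>w\<in>B. \<integral>e. f (e v) * f (e w) \<partial>P)"
    using integrable by (simp add: Bochner_Integration.integral_sum integrable_sum)
  also have "\<dots> = real (card B) * ((\<integral>k. (f k)\<^sup>2 \<partial>D) + (real (card B) - 1) * (\<integral>k. f k \<partial>D)\<^sup>2)"
    using row by simp
  finally show ?thesis by (simp add: P_def algebra_simps)
qed

lemma expectation_Pi_pmf_mean_sq_dev_le:
  fixes f :: "'b \<Rightarrow> real"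
  assumes A: "finite A" "B \<subseteq> A" "B \<noteq> {}" and f: "\<And>k. 0 \<le> f k" "\<And>k. f k \<le> 1"
  shows "(\<integral>e. ((\<Sum>v\<in>B. f (e v)) / real (card B) - (\<integral>k. f k \<partial>D))\<^sup>2 \<partial>Pi_pmf A d (\<lambda>_. D))
    \<le> 1 / real (card B)"
proof -
  define P where "P = Pi_pmf A d (\<lambda>_. D)"
  define N where "N = real (card B)"
  define m where "m = (\<integral>k. f k \<partial>D)"
  define S where "S e = (\<Sum>v\<in>B. f (e v))" for e :: "'a \<Rightarrow> 'b"
  have N: "0 < N" using A finite_subset by (auto simp: N_def card_gt_0_iff)
  have S_bound: "\<bar>S e\<bar> \<le> N" for e
  proof -
    have "0 \<le> S e"
      unfolding S_def using f by (intro sum_nonneg) auto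
    moreover have "S e \<le> N"
      using sum_bounded_above[of B "\<lambda>v. f (e v)" 1] f by (simp add: S_def N_def)
    ultimately show ?thesis by simp
  qed
  have integrable_S: "integrable P S" "integrable P (\<lambda>e. (S e)\<^sup>2)"
  proof (rule integrable_measure_pmf_bounded[OF S_bound], rule integrable_measure_pmf_bounded)
    show "\<bar>(S e)\<^sup>2\<bar> \<le> N\<^sup>2" for e
      using power_mono[OF S_bound[of e], of 2] by simp
  qed
  have ES: "(\<integral>e. S e \<partial>P) = N * m"
    unfolding P_def S_def N_def m_def using f
    by (intro expectation_Pi_pmf_sum[OF A(1,2), where c = 1]) (simp add: abs_le_iff)
  have m2: "(\<integral>k. (f k)\<^sup>2 \<partial>D) \<le> 1"
    using f by (intro measure_pmf.integral_le_const integrable_measure_pmf_bounded[where c = 1])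
      (auto simp: power_le_one abs_le_iff)
  have "(\<integral>e. (S e / N - m)\<^sup>2 \<partial>P) = (\<integral>e. (S e)\<^sup>2 / N\<^sup>2 + m\<^sup>2 - 2 * m / N * S e \<partial>P)"
    by (simp add: power2_diff power_divide mult_ac)
  also have "\<dots> = (\<integral>e. (S e)\<^sup>2 \<partial>P) / N\<^sup>2 + m\<^sup>2 - 2 * m / N * (N * m)"
    using integrable_S by (simp add: ES)
  also have "(\<integral>e. (S e)\<^sup>2 \<partial>P) = N * (\<integral>k. (f k)\<^sup>2 \<partial>D) + N * (N - 1) * m\<^sup>2"
    unfolding P_def S_def N_def m_def by (rule expectation_Pi_pmf_sum_sq[OF A(1,2) f])
  also have "(N * (\<integral>k. (f k)\<^sup>2 \<partial>D) + N * (N - 1) * m\<^sup>2) / N\<^sup>2 + m\<^sup>2 - 2 * m / N * (N * m)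
      = ((\<integral>k. (f k)\<^sup>2 \<partial>D) - m\<^sup>2) / N"
    using N by (simp add: power2_eq_square field_simps)
  also have "\<dots> \<le> 1 / N"
  proof (rule divide_right_mono)
    show "(\<integral>k. (f k)\<^sup>2 \<partial>D) - m\<^sup>2 \<le> 1"
      using m2 zero_le_power2[of m] by linarith
  qed (use N in simp)
  finally show ?thesis by (simp add: P_def S_def N_def m_def)
qed

lemma nn_integral_Pi_pmf_mean_sq_dev_le:
  fixes f :: "'b \<Rightarrow> real"
  assumes A: "finite A" "B \<subseteq> A" "B \<noteq> {}" and f: "\<And>k. 0 \<le> f k" "\<And>k. f k \<le> 1"
  shows "(\<integral>\<^sup>+e. ((\<Sum>v\<in>B. f (e v)) / real (card B) - (\<integral>k. f k \<partial>D))\<^sup>2 \<partial>Pi_pmf A d (\<lambda>_. D))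
    \<le> ennreal (1 / real (card B))"
proof -
  define X where "X e = ((\<Sum>v\<in>B. f (e v)) / real (card B) - (\<integral>k. f k \<partial>D))\<^sup>2" for e :: "'a \<Rightarrow> 'b"
  have m: "0 \<le> (\<integral>k. f k \<partial>D)" "(\<integral>k. f k \<partial>D) \<le> 1"
    using f by (auto intro!: integral_nonneg_AE measure_pmf.integral_le_const integrable_measure_pmf_bounded[where c = 1])
  have mean: "0 \<le> (\<Sum>v\<in>B. f (e v)) / real (card B)" "(\<Sum>v\<in>B. f (e v)) / real (card B) \<le> 1" for e
    using f sum_bounded_above[of B "\<lambda>v. f (e v)" 1] A finite_subset[OF A(2,1)]
    by (auto intro!: divide_nonneg_nonneg sum_nonneg simp: divide_le_eq_1 card_gt_0_iff)
  have "\<bar>(\<Sum>v\<in>B. f (e v)) / real (card B) - (\<integral>k. f k \<partial>D)\<bar> \<le> 1" for e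
    using m mean[of e] by (simp add: abs_le_iff)
  then have "\<bar>X e\<bar> \<le> 1" for e
    by (simp add: X_def abs_square_le_1)
  then have "(\<integral>\<^sup>+e. X e \<partial>Pi_pmf A d (\<lambda>_. D)) = ennreal (\<integral>e. X e \<partial>Pi_pmf A d (\<lambda>_. D))"
    by (intro nn_integral_eq_integral integrable_measure_pmf_bounded) (auto simp: X_def)
  also have "\<dots> \<le> ennreal (1 / real (card B))"
    unfolding X_def by (intro ennreal_leI expectation_Pi_pmf_mean_sq_dev_le A f)
  finally show ?thesis by (simp add: X_def)
qed

text \<open>The value of \<^const>\<open>the_enat\<close> at \<open>\<infinity>\<close> is unspecified, hence the hypothesis.\<close>
lemma expectation_nonzero_the_enat:
  assumes "pmf eta \<infinity> = 0"
  shows "(\<integral>k. of_bool (k \<noteq> 0) \<partial>map_pmf the_enat eta) = 1 - pmf eta 0"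
proof -
  define D where "D = map_pmf the_enat eta"
  have "\<infinity> \<notin> set_pmf eta" using assms by (simp add: set_pmf_eq)
  have "the_enat -` {0} \<inter> set_pmf eta = {0} \<inter> set_pmf eta"
  proof (intro equalityI subsetI)
    fix x assume "x \<in> the_enat -` {0} \<inter> set_pmf eta"
    with \<open>\<infinity> \<notin> set_pmf eta\<close> show "x \<in> {0} \<inter> set_pmf eta"
      by (cases x) (auto simp: zero_enat_def)
  qed (auto simp: zero_enat_def)
  then have "pmf D 0 = pmf eta 0"
    unfolding D_def by (metis measure_Int_set_pmf measure_pmf_single pmf_map)
  have "(\<lambda>k::nat. of_bool (k \<noteq> 0) :: real) = indicator (- {0})"
    by (auto simp: fun_eq_iff)
  then have "(\<integral>k. of_bool (k \<noteq> 0) \<partial>D) = measure D (- {0})"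
    by simp
  also have "\<dots> = 1 - pmf D 0"
    using measure_pmf.prob_compl[of "{0}" D] by (simp add: measure_pmf_single Compl_eq_Diff_UNIV)
  finally show ?thesis
    using \<open>pmf D 0 = pmf eta 0\<close> by (simp add: D_def)
qed

lemma density_potential_start_le:
  assumes "2 \<le> n" "2 \<le> K"
  shows "density_potential K m e (unvisited n {0})
    \<le> ((\<Sum>v\<in>{0..<n} - {0}. of_bool (e v \<noteq> 0)) / real (card ({0..<n} - {0::nat})) - m)\<^sup>2 + 1 / (real K - 1)"
proof -
  define U where "U = {0..<n} - {0::nat}"
  have "real (card (occupied e U)) = (\<Sum>v\<in>U. of_bool (e v \<noteq> 0))"
    by (simp add: occupied_def U_def sum_of_bool_eq Int_def)
  moreover have "0 \<le> 1 / (real (card U) - 1)" if "K < card U"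
    using that assms by simp
  moreover have "0 < 1 / (real K - 1)"
    using assms by simp
  ultimately show ?thesis
    by (simp add: density_potential_def unvisited_def U_def[symmetric])
qed

lemma nn_integral_density_potential_start:
  assumes eta: "pmf eta \<infinity> = 0" and n: "2 \<le> n" and K: "2 \<le> K"
  shows "(\<integral>\<^sup>+e. density_potential K (1 - pmf eta 0) e (unvisited n {0}) \<partial>frog_init eta n)
    \<le> ennreal (1 / (real n - 1) + 1 / (real K - 1))"
proof -
  define m where "m = 1 - pmf eta 0"
  define X where "X e = ((\<Sum>v\<in>{0..<n} - {0}. of_bool (e v \<noteq> 0)) / real (card ({0..<n} - {0::nat})) - m)\<^sup>2"
    for e :: "nat \<Rightarrow> nat"
  have "(\<integral>\<^sup>+e. X e \<partial>frog_init eta n) \<le> ennreal (1 / real (card ({0..<n} - {0::nat})))"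
    unfolding X_def m_def frog_init_def expectation_nonzero_the_enat[OF eta, symmetric]
    by (rule nn_integral_Pi_pmf_mean_sq_dev_le) (use atLeast0LessThan_Diff_singleton_ne_empty[OF n] in auto)
  also have "real (card ({0..<n} - {0::nat})) = real n - 1"
    using n by (simp add: of_nat_diff)
  finally have "(\<integral>\<^sup>+e. X e + 1 / (real K - 1) \<partial>frog_init eta n) \<le> ennreal (1 / (real n - 1) + 1 / (real K - 1))"
    using n K by (simp add: nn_integral_add X_def ennreal_plus add_mono)
  moreover have "(\<integral>\<^sup>+e. density_potential K m e (unvisited n {0}) \<partial>frog_init eta n)
      \<le> (\<integral>\<^sup>+e. X e + 1 / (real K - 1) \<partial>frog_init eta n)"
    unfolding X_def by (intro nn_integral_mono ennreal_leI density_potential_start_le[OF n K])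
  ultimately show ?thesis by (simp add: m_def)
qed

section \<open>Few visited vertices are unlikely\<close>

lemma one_le_potentials:
  assumes K: "2 \<le> K" and m: "0 < m" and q: "0 \<le> q"
    and threshold: "\<pi> * (real n - 1) \<le> m * (real K + 1) / 2"
    and unvisited: "K < card (unvisited n (snd s))"
  shows "1 \<le> active_potential n K s + extinction_potential n \<pi> q e s
    + 4 / m\<^sup>2 * density_potential K m e (unvisited n (snd s))"
proof -
  define a where "a = real (card (occupied e (unvisited n (snd s))))"
  have nonneg: "0 \<le> active_potential n K s" "0 \<le> extinction_potential n \<pi> q e s"
    "0 \<le> 4 / m\<^sup>2 * density_potential K m e (unvisited n (snd s))"
    using q K by (simp_all add: active_potential_nonneg extinction_potential_nonneg density_potential_nonneg)
  consider "fst s \<noteq> {#}" | "fst s = {#}" "\<pi> * (real n - 1) < a" | "a \<le> \<pi> * (real n - 1)"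
    by linarith
  then show ?thesis
  proof cases
    case 1
    then have "1 \<le> active_potential n K s"
      using unvisited by (simp add: active_potential_def pow2_card_above_def)
    then show ?thesis using nonneg by simp
  next
    case 2
    then have "extinction_potential n \<pi> q e s = 1"
      by (simp add: extinction_potential_def a_def)
    then show ?thesis using nonneg by simp
  next
    case 3
    then have "1 \<le> 4 / m\<^sup>2 * density_potential K m e (unvisited n (snd s))"
      using threshold by (intro one_le_density_potential[OF K m unvisited]) (simp add: a_def)
    then show ?thesis using nonneg by simp
  qed
qed

lemma indicator_few_visited_le_potentials:
  assumes K: "2 \<le> K" and m: "0 < m" and q: "0 \<le> q"
    and threshold: "\<pi> * (real n - 1) \<le> m * (real K + 1) / 2" and invar: "frog_invar n s"
  shows "indicator {s. card (snd s) + K < n} s \<le> ennreal (active_potential n K s)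
    + ennreal (extinction_potential n \<pi> q e s) + ennreal (4 / m\<^sup>2) * ennreal (density_potential K m e (unvisited n (snd s)))"
proof -
  have "card (snd s) + K < n \<Longrightarrow> K < card (unvisited n (snd s))"
    using invar by (simp add: frog_invar_def card_unvisited)
  from one_le_potentials[OF K m q threshold this] show ?thesis
    using K q by (auto simp: indicator_def ennreal_plus[symmetric] ennreal_mult[symmetric] ennreal_leI
        active_potential_nonneg extinction_potential_nonneg density_potential_nonneg simp del: ennreal_plus)
qed

lemma emeasure_frog_state_few_visited_le:
  fixes m :: real
  assumes n: "2 \<le> n" and K: "2 \<le> K" "K < n" and p: "0 \<le> p" "p \<le> 1" and m: "0 < m" "m \<le> 1"
    and q: "0 \<le> q" "q \<le> 1"
    and rate: "1 - p + p * (q * (1 - m * (real K + 1) / (2 * (real n - 1)) * (1 - q))) \<le> q"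
  shows "emeasure (frog_state p n e t) {s. card (snd s) + K < n}
    \<le> ennreal (active_decay p n K ^ t * 2 ^ n + q) + ennreal (4 / m\<^sup>2) * density_potential K m e (unvisited n {0})"
proof -
  define \<pi> where "\<pi> = m * (real K + 1) / (2 * (real n - 1))"
  define D where "D = frog_state p n e t"
  have \<pi>: "0 \<le> \<pi>" "\<pi> \<le> 1" "\<pi> * (real n - 1) \<le> m * (real K + 1) / 2"
  proof -
    have "m * (real K + 1) \<le> 1 * (2 * (real n - 1))"
      using n K m by (intro mult_mono) auto
    then show "0 \<le> \<pi>" "\<pi> \<le> 1"
      using n m by (simp_all add: \<pi>_def)
    show "\<pi> * (real n - 1) \<le> m * (real K + 1) / 2"
      using n by (simp add: \<pi>_def field_simps)
  qed
  have "emeasure D {s. card (snd s) + K < n} = (\<integral>\<^sup>+s. indicator {s. card (snd s) + K < n} s \<partial>D)"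
    by simp
  also have "\<dots> \<le> (\<integral>\<^sup>+s. ennreal (active_potential n K s) + ennreal (extinction_potential n \<pi> q e s)
      + ennreal (4 / m\<^sup>2) * ennreal (density_potential K m e (unvisited n (snd s))) \<partial>D)"
    unfolding D_def
    by (intro nn_integral_mono_AE AE_pmfI indicator_few_visited_le_potentials[OF K(1) m(1) q(1) \<pi>(3)]
        frog_invar_state[OF n])
  also have "\<dots> = (\<integral>\<^sup>+s. active_potential n K s \<partial>D) + (\<integral>\<^sup>+s. extinction_potential n \<pi> q e s \<partial>D)
      + ennreal (4 / m\<^sup>2) * (\<integral>\<^sup>+s. density_potential K m e (unvisited n (snd s)) \<partial>D)"
    by (simp add: nn_integral_add nn_integral_cmult)
  also have "\<dots> \<le> ennreal (active_decay p n K ^ t * 2 ^ n) + ennreal q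
      + ennreal (4 / m\<^sup>2) * density_potential K m e (unvisited n {0})"
    unfolding D_def
  proof (intro add_mono mult_left_mono)
    show "(\<integral>\<^sup>+s. active_potential n K s \<partial>frog_state p n e t) \<le> ennreal (active_decay p n K ^ t * 2 ^ n)"
      by (rule nn_integral_active_potential_frog_state_le[OF n K(2) p])
    have "(\<integral>\<^sup>+s. extinction_potential n \<pi> q e s \<partial>frog_state p n e t) \<le> extinction_potential n \<pi> q e (frog_start e)"
      by (rule nn_integral_frog_state_le_start[OF n extinction_potential_step[OF n \<pi>(1,2) p q rate[folded \<pi>_def]]])
    then show "(\<integral>\<^sup>+s. extinction_potential n \<pi> q e s \<partial>frog_state p n e t) \<le> ennreal q"
      using extinction_potential_start_le[OF q] by (meson ennreal_leI order_trans)
    have "(\<integral>\<^sup>+s. density_potential K m e (unvisited n (snd s)) \<partial>frog_state p n e t)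
        \<le> density_potential K m e (unvisited n (snd (frog_start e)))"
      by (rule nn_integral_frog_state_le_start[OF n density_potential_step[OF n K(1) p]])
    then show "(\<integral>\<^sup>+s. density_potential K m e (unvisited n (snd s)) \<partial>frog_state p n e t)
        \<le> density_potential K m e (unvisited n {0})"
      by (simp add: frog_start_def)
  qed simp
  finally show ?thesis
    using active_decay_nonneg[OF n K(2) p] q by (simp add: D_def ennreal_plus)
qed

lemma prob_frog_time_few_visited_le:
  fixes eta :: "enat pmf"
  defines "m \<equiv> 1 - pmf eta 0"
  assumes eta: "pmf eta \<infinity> = 0" "pmf eta 0 < 1" and n: "2 \<le> n" and K: "2 \<le> K" "K < n"
    and p: "0 \<le> p" "p \<le> 1" and q: "0 \<le> q" "q \<le> 1"
    and rate: "1 - p + p * (q * (1 - m * (real K + 1) / (2 * (real n - 1)) * (1 - q))) \<le> q"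
  shows "measure (frog_time eta p n t) {s. card (snd s) + K < n}
    \<le> active_decay p n K ^ t * 2 ^ n + q + 4 / m\<^sup>2 * (1 / (real n - 1) + 1 / (real K - 1))"
proof -
  define a where "a = active_decay p n K ^ t * 2 ^ n + q"
  define B where "B = {s :: nat multiset \<times> nat set. card (snd s) + K < n}"
  define r where "r = 1 / (real n - 1) + 1 / (real K - 1)"
  have r: "0 \<le> r" using n K by (simp add: r_def)
  have m: "0 < m" "m \<le> 1" using eta by (simp_all add: m_def)
  have a: "0 \<le> a"
    using active_decay_nonneg[OF n K(2) p] q by (simp add: a_def)
  have "emeasure (frog_time eta p n t) B = (\<integral>\<^sup>+e. emeasure (frog_state p n e t) B \<partial>frog_init eta n)"
    by (simp add: frog_time_def)
  also have "\<dots> \<le> (\<integral>\<^sup>+e. ennreal a + ennreal (4 / m\<^sup>2) * density_potential K m e (unvisited n {0}) \<partial>frog_init eta n)"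
    unfolding a_def B_def using emeasure_frog_state_few_visited_le[OF n K p m q rate]
    by (intro nn_integral_mono) simp
  also have "\<dots> = ennreal a + ennreal (4 / m\<^sup>2) *
      (\<integral>\<^sup>+e. density_potential K m e (unvisited n {0}) \<partial>frog_init eta n)"
    by (simp add: nn_integral_add nn_integral_cmult)
  also have "\<dots> \<le> ennreal a + ennreal (4 / m\<^sup>2) * ennreal r"
    unfolding m_def r_def
    by (intro add_left_mono mult_left_mono nn_integral_density_potential_start[OF eta(1) n K(1)]) simp
  also have "\<dots> = ennreal (a + 4 / m\<^sup>2 * r)"
    using a r by (simp add: ennreal_plus ennreal_mult'' del: times_divide_eq_left)
  finally have "ennreal (measure (frog_time eta p n t) B) \<le> ennreal (a + 4 / m\<^sup>2 * r)"
    by (simp only: measure_pmf.emeasure_eq_measure)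
  moreover have "0 \<le> a + 4 / m\<^sup>2 * r"
    using a r by simp
  ultimately show ?thesis
    unfolding B_def a_def r_def by (simp only: ennreal_le_iff)
qed

lemma frog_prob_ge_eq_1:
  "0 < pmf eta \<infinity> \<or> p = 1 \<Longrightarrow> x \<le> real n \<Longrightarrow> frog_prob_ge eta p n x = 1"
  by (simp add: frog_prob_ge_def)

lemma frog_prob_ge_le_1: "frog_prob_ge eta p n x \<le> 1"
  by (auto simp: frog_prob_ge_def intro!: cSUP_least)

lemma prob_compl_few_visited_le:
  fixes M :: "('a \<times> nat set) pmf"
  assumes "real K \<le> \<epsilon> * real n"
  shows "1 - measure M {s. card (snd s) + K < n} \<le> measure M {s. (1 - \<epsilon>) * real n \<le> real (card (snd s))}"
proof -
  have "1 - measure M {s. card (snd s) + K < n} = measure M {s. \<not> card (snd s) + K < n}"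
    using measure_pmf.prob_compl[of "{s. card (snd s) + K < n}" M]
    by (simp add: Compl_eq_Diff_UNIV[symmetric] Collect_neg_eq[symmetric])
  also have "\<dots> \<le> measure M {s. (1 - \<epsilon>) * real n \<le> real (card (snd s))}"
    using assms by (intro measure_pmf.finite_measure_mono) (auto simp: algebra_simps)
  finally show ?thesis .
qed

lemma frog_prob_ge_lower_bound_threshold:
  fixes eta :: "enat pmf"
  defines "m \<equiv> 1 - pmf eta 0"
  assumes eta: "pmf eta \<infinity> = 0" "pmf eta 0 < 1" and K: "2 \<le> K" "K < n" "real K \<le> \<epsilon> * real n"
    and p: "0 < p" "p < 1" and q: "0 \<le> q" "q \<le> 1"
    and rate: "1 - p + p * (q * (1 - m * (real K + 1) / (2 * (real n - 1)) * (1 - q))) \<le> q"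
  shows "1 - (q + 4 / m\<^sup>2 * (1 / (real n - 1) + 1 / (real K - 1))) \<le> frog_prob_ge eta p n ((1 - \<epsilon>) * real n)"
proof -
  define R where "R = q + 4 / m\<^sup>2 * (1 / (real n - 1) + 1 / (real K - 1))"
  define f where "f t = measure (frog_time eta p n t) {s. (1 - \<epsilon>) * real n \<le> real (card (snd s))}" for t
  have n: "2 \<le> n" using K by simp
  have f_ge: "1 - (active_decay p n K ^ t * 2 ^ n + R) \<le> f t" for t
    using prob_compl_few_visited_le[OF K(3), of "frog_time eta p n t"]
      prob_frog_time_few_visited_le[OF eta n K(1,2) _ _ q rate[unfolded m_def], of t] p
    by (simp add: R_def m_def f_def)
  have "(\<lambda>t. 1 - (active_decay p n K ^ t * 2 ^ n + R)) \<longlonglongrightarrow> 1 - (0 * 2 ^ n + R)"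
    using active_decay_nonneg[OF n K(2)] active_decay_less_1[OF n p(1)] p
    by (intro tendsto_intros LIMSEQ_power_zero) simp_all
  moreover have "1 - (active_decay p n K ^ t * 2 ^ n + R) \<le> (SUP t. f t)" for t
    using f_ge[of t] by (rule order_trans) (rule cSUP_upper, auto simp: f_def intro!: bdd_aboveI[where M = 1])
  ultimately have "1 - R \<le> (SUP t. f t)"
    by (simp add: LIMSEQ_le_const2)
  then show ?thesis
    using eta p by (simp add: frog_prob_ge_def f_def R_def)
qed

lemma obtain_visit_threshold:
  assumes \<epsilon>: "0 < \<epsilon>" "\<epsilon> < 1" and n: "3 \<le> \<epsilon> * real n"
  obtains K :: nat where "2 \<le> K" "K < n" "real K \<le> \<epsilon> * real n" "\<epsilon> \<le> (real K + 1) / (real n - 1)"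
    "1 / (real K - 1) \<le> 1 / (\<epsilon> * real n - 2)"
proof -
  define K where "K = nat \<lfloor>\<epsilon> * real n\<rfloor>"
  have "0 < real n" using n by (cases "n = 0") auto
  then have "\<epsilon> * real n < real n" using mult_strict_right_mono[OF \<epsilon>(2), of "real n"] by simp
  have K: "real K \<le> \<epsilon> * real n" "\<epsilon> * real n - 1 < real K"
    using n by (simp_all add: K_def)
  then have "2 \<le> K" "K < n"
    using n \<open>\<epsilon> * real n < real n\<close> by linarith+
  moreover have "\<epsilon> * (real n - 1) \<le> real K + 1"
    using K \<epsilon> by (simp add: algebra_simps)
  then have "\<epsilon> \<le> (real K + 1) / (real n - 1)"
    using \<open>2 \<le> K\<close> \<open>K < n\<close> by (simp add: field_simps)
  moreover have "1 / (real K - 1) \<le> 1 / (\<epsilon> * real n - 2)"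
    using K n by (intro divide_left_mono) auto
  ultimately show thesis using K(1) that by blast
qed

definition coverage_error :: "real \<Rightarrow> real \<Rightarrow> real \<Rightarrow> nat \<Rightarrow> real" where
  "coverage_error m \<epsilon> p n = 2 * (1 - p) / (p * m * \<epsilon>) + 4 / m\<^sup>2 * (1 / (real n - 1) + 1 / (\<epsilon> * real n - 2))"

lemma frog_prob_ge_lower_bound:
  fixes eta :: "enat pmf"
  defines "m \<equiv> 1 - pmf eta 0"
  assumes eta: "pmf eta \<infinity> = 0" "pmf eta 0 < 1" and p: "0 < p" "p \<le> 1" and \<epsilon>: "0 < \<epsilon>" "\<epsilon> < 1"
    and n: "3 \<le> \<epsilon> * real n"
  shows "1 - coverage_error m \<epsilon> p n \<le> frog_prob_ge eta p n ((1 - \<epsilon>) * real n)"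
proof -
  have m: "0 < m" using eta by (simp add: m_def)
  obtain K where K: "2 \<le> K" "K < n" "real K \<le> \<epsilon> * real n" "\<epsilon> \<le> (real K + 1) / (real n - 1)"
    and K_error: "1 / (real K - 1) \<le> 1 / (\<epsilon> * real n - 2)"
    using obtain_visit_threshold[OF \<epsilon> n] .
  show ?thesis
  proof (cases "p = 1")
    case True
    have "0 \<le> 1 / (real n - 1)" "0 \<le> 1 / (\<epsilon> * real n - 2)" using K n by simp_all
    then show ?thesis
      using True \<epsilon> by (simp add: frog_prob_ge_eq_1 coverage_error_def mult_left_le_one_le)
  next
    case False
    define \<pi> where "\<pi> = m * ((real K + 1) / (real n - 1)) / 2"
    define q where "q = min 1 ((1 - p) / (p * \<pi>))"
    have \<pi>: "m * \<epsilon> / 2 \<le> \<pi>"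
      unfolding \<pi>_def using m K(4) by (intro divide_right_mono mult_left_mono) auto
    moreover have "0 < m * \<epsilon>" using m \<epsilon> by simp
    ultimately have "0 < \<pi>" by linarith
    note q = extinction_rate_supersolution[OF p this, folded q_def]
    have "(1 - pmf eta 0) * (real K + 1) / (2 * (real n - 1)) = \<pi>"
      by (simp add: \<pi>_def m_def)
    moreover have "p < 1" using p False by simp
    ultimately have "1 - (q + 4 / m\<^sup>2 * (1 / (real n - 1) + 1 / (real K - 1)))
        \<le> frog_prob_ge eta p n ((1 - \<epsilon>) * real n)"
      using frog_prob_ge_lower_bound_threshold[OF eta K(1-3) p(1) _ q(1,2)] q(3)
      unfolding m_def by simp
    moreover have "q \<le> 2 * (1 - p) / (p * m * \<epsilon>)"
    proof -
      have "q \<le> (1 - p) / (p * \<pi>)" by (simp add: q_def)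
      also have "\<dots> \<le> (1 - p) / (p * (m * \<epsilon> / 2))"
        using p m \<epsilon> \<pi> \<open>0 < \<pi>\<close> by (intro divide_left_mono mult_left_mono mult_pos_pos) auto
      finally show ?thesis by (simp add: field_simps)
    qed
    moreover have "4 / m\<^sup>2 * (1 / (real n - 1) + 1 / (real K - 1))
        \<le> 4 / m\<^sup>2 * (1 / (real n - 1) + 1 / (\<epsilon> * real n - 2))"
      using K_error by (intro mult_left_mono add_left_mono) auto
    ultimately show ?thesis by (simp add: coverage_error_def)
  qed
qed

lemma coverage_error_tendsto_0:
  assumes "p \<longlonglongrightarrow> 1" "0 < m" "0 < \<epsilon>"
  shows "(\<lambda>n. coverage_error m \<epsilon> (p n) n) \<longlonglongrightarrow> 0"
proof -
  have "(\<lambda>n. 1 / (real n - 1)) \<longlonglongrightarrow> 0" "(\<lambda>n. 1 / (\<epsilon> * real n - 2)) \<longlonglongrightarrow> 0"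
    using \<open>0 < \<epsilon>\<close> by real_asymp+
  then have "(\<lambda>n. coverage_error m \<epsilon> (p n) n) \<longlonglongrightarrow> 2 * (1 - 1) / (1 * m * \<epsilon>) + 4 / m\<^sup>2 * (0 + 0)"
    unfolding coverage_error_def using assms by (intro tendsto_intros) auto
  then show ?thesis by simp
qed

theorem theorem1p1:
  fixes eta :: "enat pmf" and p :: "nat \<Rightarrow> real" and \<epsilon> :: real
  assumes "pmf eta 0 < 1"
    and "\<forall>n. 0 < p n \<and> p n \<le> 1"
    and "p \<longlonglongrightarrow> 1"
    and "0 < \<epsilon>" and "\<epsilon> < 1"
  shows "(\<lambda>n. frog_prob_ge eta (p n) n ((1 - \<epsilon>) * real n)) \<longlonglongrightarrow> 1"
proof (cases "0 < pmf eta \<infinity>")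
  case True
  have "frog_prob_ge eta (p n) n ((1 - \<epsilon>) * real n) = 1" for n
    using True \<open>0 < \<epsilon>\<close> by (intro frog_prob_ge_eq_1) (simp_all add: algebra_simps)
  then show ?thesis by simp
next
  case False
  then have eta: "pmf eta \<infinity> = 0" using pmf_nonneg[of eta \<infinity>] by linarith
  define m where "m = 1 - pmf eta 0"
  have lower: "\<forall>\<^sub>F n in sequentially. 1 - coverage_error m \<epsilon> (p n) n \<le> frog_prob_ge eta (p n) n ((1 - \<epsilon>) * real n)"
    using eventually_ge_at_top[of "nat \<lceil>3 / \<epsilon>\<rceil>"]
  proof eventually_elim
    case (elim n)
    then have "3 \<le> \<epsilon> * real n" using \<open>0 < \<epsilon>\<close> by (simp add: field_simps)
    then show ?case
      using assms(2,4,5) unfolding m_def by (intro frog_prob_ge_lower_bound[OF eta assms(1)]) auto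
  qed
  have "0 < m" using assms(1) by (simp add: m_def)
  then have "(\<lambda>n. 1 - coverage_error m \<epsilon> (p n) n) \<longlonglongrightarrow> 1 - 0"
    using assms(3,4) by (intro tendsto_diff tendsto_const coverage_error_tendsto_0)
  then show ?thesis
    by (intro tendsto_sandwich[OF lower _ _ tendsto_const]) (simp_all add: frog_prob_ge_le_1)
qed

end
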